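(* Let ${\bf u}\in\mathcal A^{\mathbb N}$ be an infinite word with its language closed under reversal and $D({\bf u})<+\infty$. There exists a positive integer $K$ such that for every factor $w$ of ${\bf u}$ of length at least $K$: if $w$ is not a palindrome, then the graph $\Gamma(w)$ is a tree; if $w$ is a palindrome, then the graph $\Theta(w)$ is a tree.
   Context: $\widetilde w$ is the reversal of $w$; $w$ is a palindrome if $w=\widetilde w$. Palindromic defect: for a finite word $w$ of length $n$, $D(w)=n+1-$(number of distinct palindromic factors of $w$, including the empty word), and $D({\bf u})=\sup D(w)$ over factors of ${\bf u}$. The language is closed under reversal if the reversal of every factor is a factor. With $E^+(w)=\{b: wb\text{ factor}\}$, $E^-(w)=\{a: aw\text{ factor}\}$, $E(w)=\{(a,b): awb\text{ factor}\}$: $\Gamma(w)$ is the bipartite graph on $(E^-(w)\times\{-1\})\cup(E^+(w)\times\{+1\})$ with edges $\{(a,-1),(b,+1)\}$ for $(a,b)\in E(w)$; for palindromic $w$, $\Theta(w)$ is the graph on $E^+(w)$ with edges $\{a,b\}$ for $(a,b)\in E(w)$, $a\neq b$. *)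

theory Defs
  imports Main "HOL-Library.Sublist"
begin

definition factor :: "'a list \<Rightarrow> (nat \<Rightarrow> 'a) \<Rightarrow> bool" where
  "factor w u \<longleftrightarrow> (\<exists>i. w = map u [i..<i + length w])"

definition palindrome :: "'a list \<Rightarrow> bool" where
  "palindrome w \<longleftrightarrow> rev w = w"

definition closed_under_reversal :: "(nat \<Rightarrow> 'a) \<Rightarrow> bool" where
  "closed_under_reversal u \<longleftrightarrow> (\<forall>w. factor w u \<longrightarrow> factor (rev w) u)"

(* palindromic factors of a finite word, including the empty word *)
definition pal_factors :: "'a list \<Rightarrow> 'a list set" where
  "pal_factors w = {p. sublist p w \<and> palindrome p}"

definition defect :: "'a list \<Rightarrow> nat" where
  "defect w = length w + 1 - card (pal_factors w)"

definition finite_defect :: "(nat \<Rightarrow> 'a) \<Rightarrow> bool" where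
  "finite_defect u \<longleftrightarrow> (\<exists>B. \<forall>w. factor w u \<longrightarrow> defect w \<le> B)"

definition ext_right :: "(nat \<Rightarrow> 'a) \<Rightarrow> 'a list \<Rightarrow> 'a set" where
  "ext_right u w = {b. factor (w @ [b]) u}"

definition ext_left :: "(nat \<Rightarrow> 'a) \<Rightarrow> 'a list \<Rightarrow> 'a set" where
  "ext_left u w = {a. factor (a # w) u}"

definition bi_ext :: "(nat \<Rightarrow> 'a) \<Rightarrow> 'a list \<Rightarrow> ('a \<times> 'a) set" where
  "bi_ext u w = {(a, b). factor (a # w @ [b]) u}"

definition walk :: "'v set \<Rightarrow> 'v set set \<Rightarrow> 'v list \<Rightarrow> bool" where
  "walk V E p \<longleftrightarrow> p \<noteq> [] \<and> set p \<subseteq> V \<and>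
     (\<forall>i. Suc i < length p \<longrightarrow> {p ! i, p ! Suc i} \<in> E)"

definition connected_graph :: "'v set \<Rightarrow> 'v set set \<Rightarrow> bool" where
  "connected_graph V E \<longleftrightarrow>
     (\<forall>x\<in>V. \<forall>y\<in>V. \<exists>p. walk V E p \<and> hd p = x \<and> last p = y)"

definition has_cycle :: "'v set \<Rightarrow> 'v set set \<Rightarrow> bool" where
  "has_cycle V E \<longleftrightarrow>
     (\<exists>p. walk V E p \<and> distinct p \<and> length p \<ge> 3 \<and> {last p, hd p} \<in> E)"

definition is_tree :: "'v set \<Rightarrow> 'v set set \<Rightarrow> bool" where
  "is_tree V E \<longleftrightarrow> finite V \<and> V \<noteq> {} \<and>
     E \<subseteq> {{x, y} | x y. x \<in> V \<and> y \<in> V \<and> x \<noteq> y} \<and>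
     connected_graph V E \<and> \<not> has_cycle V E"

(* Gamma(w): vertices (a,-1) encoded as Inl a, (b,+1) encoded as Inr b *)
definition Gamma_V :: "(nat \<Rightarrow> 'a) \<Rightarrow> 'a list \<Rightarrow> ('a + 'a) set" where
  "Gamma_V u w = Inl ` ext_left u w \<union> Inr ` ext_right u w"

definition Gamma_E :: "(nat \<Rightarrow> 'a) \<Rightarrow> 'a list \<Rightarrow> ('a + 'a) set set" where
  "Gamma_E u w = {{Inl a, Inr b} | a b. (a, b) \<in> bi_ext u w}"

definition Theta_V :: "(nat \<Rightarrow> 'a) \<Rightarrow> 'a list \<Rightarrow> 'a set" where
  "Theta_V u w = ext_right u w"

definition Theta_E :: "(nat \<Rightarrow> 'a) \<Rightarrow> 'a list \<Rightarrow> 'a set set" where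
  "Theta_E u w = {{a, b} | a b. (a, b) \<in> bi_ext u w \<and> a \<noteq> b}"

end

theory Submission
  imports Defs
begin

text \<open>Finite defect forces every sufficiently long prefix of \<open>u\<close> to end in a palindrome
  occurring nowhere earlier in it. For a long factor \<open>x\<close> this makes every complete return word
  to \<open>{x, x\<^sup>~}\<close> (a factor beginning with \<open>x\<close>, ending with \<open>x\<close> or \<open>x\<^sup>~\<close>, with no other
  occurrence of either inside) a palindrome. Reading \<open>u\<close> from left to right, the occurrences of
  a long factor \<open>w\<close> and its reversal therefore trace a walk through \<open>\<Gamma>(w)\<close>, resp. \<open>\<Theta>(w)\<close>:
  each occurrence traverses the edge between its left and right extension, consecutive
  occurrences are mirror images of each other, so the walk is continuous, and whenever the walk
  comes back to a vertex it does so along the edge by which it left. A walk with this property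
  traces a tree.\<close>

section \<open>Segments of an infinite word\<close>

definition seg :: "(nat \<Rightarrow> 'a) \<Rightarrow> nat \<Rightarrow> nat \<Rightarrow> 'a list" where
  "seg u i n = map u [i..<i + n]"

lemma length_seg [simp]: "length (seg u i n) = n"
  by (simp add: seg_def)

lemma nth_seg [simp]: "t < n \<Longrightarrow> seg u i n ! t = u (i + t)"
  by (simp add: seg_def)

lemma seg_add: "seg u i (m + n) = seg u i m @ seg u (i + m) n"
proof -
  have "[i..<i + m + n] = [i..<i + m] @ [i + m..<i + m + n]"
    using upt_add_eq_append[of i "i + m" n] by simp
  then show ?thesis by (simp add: seg_def add.assoc)
qed

lemma seg_Suc: "seg u i (Suc n) = seg u i n @ [u (i + n)]"
  by (simp add: seg_def)

lemma seg_Cons: "seg u i (Suc n) = u i # seg u (Suc i) n"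
  by (simp add: seg_def upt_rec)

lemma seg_eq_rev_iff: "seg u i n = rev (seg u j n) \<longleftrightarrow> (\<forall>t<n. u (i + t) = u (j + n - 1 - t))"
  by (simp add: list_eq_iff_nth_eq rev_nth)

lemma palindrome_seg_iff: "palindrome (seg u i n) \<longleftrightarrow> (\<forall>t<n. u (i + t) = u (i + n - 1 - t))"
  by (metis palindrome_def seg_eq_rev_iff)

lemma palindrome_seg_nth:
  assumes "palindrome (seg u i n)" "t < n"
  shows "u (i + t) = u (i + n - 1 - t)"
  using assms unfolding palindrome_seg_iff by blast

lemma palindrome_rev_iff [simp]: "palindrome (rev w) \<longleftrightarrow> palindrome w"
  by (metis palindrome_def rev_rev_ident)

lemma factor_iff_seg: "factor w u \<longleftrightarrow> (\<exists>i. seg u i (length w) = w)"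
  unfolding factor_def seg_def by (metis (no_types))

lemma factor_seg [simp]: "factor (seg u i n) u"
  by (auto simp: factor_iff_seg)

lemma take_drop_seg:
  assumes "j + l \<le> n"
  shows "take l (drop j (seg u i n)) = seg u (i + j) l"
  using assms by (simp add: seg_def drop_map take_map add.assoc)

lemma sublist_seg:
  assumes "i \<le> j" "j + k \<le> i + n"
  shows "sublist (seg u j k) (seg u i n)"
proof -
  have "seg u i n = seg u i (j - i) @ seg u j k @ seg u (j + k) (i + n - (j + k))"
    using assms seg_add[of u i "j - i" "k + (i + n - (j + k))"] seg_add[of u j k "i + n - (j + k)"]
    by simp
  then show ?thesis by (metis sublist_appendI)
qed

lemma suffix_seg_start:
  assumes "suffix s (seg u 0 n)"
  shows "s = seg u (n - length s) (length s)"
proof -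
  obtain zs where e: "seg u 0 n = zs @ s" using assms unfolding suffix_def by auto
  have zs: "length zs = n - length s" and "length s \<le> n" using arg_cong[OF e, of length] by simp_all
  have "s = take (length s) (drop (n - length s) (seg u 0 n))" using e zs by simp
  then show ?thesis using take_drop_seg[of "n - length s" "length s" n u 0] \<open>length s \<le> n\<close> by simp
qed

lemma palindrome_seg_ends:
  assumes "palindrome (seg u i n)" "l \<le> n"
  shows "seg u (i + n - l) l = rev (seg u i l)"
  unfolding seg_eq_rev_iff
proof (intro allI impI)
  fix t assume "t < l"
  have "u (i + (l - 1 - t)) = u (i + n - 1 - (l - 1 - t))"
    using \<open>t < l\<close> assms by (intro palindrome_seg_nth) simp_all
  moreover have "i + (l - 1 - t) = i + l - 1 - t" "i + n - 1 - (l - 1 - t) = i + n - l + t"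
    using \<open>t < l\<close> assms(2) by auto
  ultimately show "u (i + n - l + t) = u (i + l - 1 - t)" by simp
qed

section \<open>Finite defect forces unioccurrent palindromic suffixes\<close>

lemma finite_pal_factors: "finite (pal_factors v)"
  by (rule finite_subset[of _ "set (sublists v)"]) (auto simp: pal_factors_def)

lemma pal_factors_snoc_subset: "pal_factors v \<subseteq> pal_factors (v @ [c])"
  by (auto simp: pal_factors_def sublist_snoc)

lemma new_pal_factor_snoc:
  assumes "s \<in> pal_factors (v @ [c]) - pal_factors v"
  shows "suffix s (v @ [c])" "\<not> sublist s v" "palindrome s"
  using assms by (auto simp: pal_factors_def sublist_snoc)

text \<open>A palindromic suffix of a longer palindromic suffix is also its prefix, hence
  occurs before the last letter.\<close>

lemma new_pal_factor_snoc_unique: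
  assumes "s \<in> pal_factors (v @ [c]) - pal_factors v" "s' \<in> pal_factors (v @ [c]) - pal_factors v"
  shows "s = s'"
proof -
  have main: "s = s'" if new: "s \<in> pal_factors (v @ [c]) - pal_factors v"
      "s' \<in> pal_factors (v @ [c]) - pal_factors v" and le: "length s \<le> length s'" for s s'
  proof (rule ccontr)
    assume "s \<noteq> s'"
    note s = new_pal_factor_snoc[OF new(1)] and s' = new_pal_factor_snoc[OF new(2)]
    have "suffix s s'" using suffix_length_suffix[OF s(1) s'(1) le] .
    with \<open>s \<noteq> s'\<close> le have shorter: "length s < length s'"
      by (auto simp: suffix_def)
    from \<open>suffix s s'\<close> s(3) s'(3) have "prefix s s'"
      by (metis palindrome_def suffix_to_prefix)
    obtain s'' c' where s'': "s' = s'' @ [c']"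
      using shorter by (cases s' rule: rev_exhaust) auto
    have "prefix s s''" using \<open>prefix s s'\<close> shorter unfolding s'' prefix_snoc by auto
    moreover have "suffix s'' v" using s'(1) unfolding s'' by (simp add: suffix_def)
    ultimately have "sublist s v" by (meson prefix_imp_sublist suffix_imp_sublist sublist_order.order_trans)
    with s(2) show False ..
  qed
  show ?thesis using main[OF assms] main[OF assms(2,1)] by (cases "length s \<le> length s'") auto
qed

lemma card_pal_factors_snoc: "card (pal_factors (v @ [c])) \<le> Suc (card (pal_factors v))"
proof -
  let ?new = "pal_factors (v @ [c]) - pal_factors v"
  have "card ?new \<le> 1"
    using card_le_Suc0_iff_eq[of ?new] finite_pal_factors new_pal_factor_snoc_unique
    by (metis One_nat_def finite_Diff)
  moreover have "pal_factors (v @ [c]) = pal_factors v \<union> ?new" using pal_factors_snoc_subset[of v c] by blast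
  then have "card (pal_factors (v @ [c])) \<le> card (pal_factors v) + card ?new"
    using card_Un_le[of "pal_factors v" ?new] by simp
  ultimately show ?thesis by linarith
qed

lemma pal_factors_Nil: "pal_factors [] = {[]}"
  by (auto simp: pal_factors_def palindrome_def)

lemma card_pal_factors_le: "card (pal_factors v) \<le> Suc (length v)"
proof (induction v rule: rev_induct)
  case Nil
  then show ?case by (simp add: pal_factors_Nil)
next
  case (snoc c v)
  then show ?case using card_pal_factors_snoc[of v c] by simp
qed

lemma defect_snoc: "defect v \<le> defect (v @ [c])"
  using card_pal_factors_snoc[of v c] card_pal_factors_le[of v] by (simp add: defect_def)

lemma defect_snoc_eq:
  assumes "defect (v @ [c]) = defect v"
  obtains s where "suffix s (v @ [c])" "\<not> sublist s v" "palindrome s"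
proof -
  have "card (pal_factors (v @ [c])) \<noteq> card (pal_factors v)"
    using assms card_pal_factors_le[of v] card_pal_factors_le[of "v @ [c]"] by (simp add: defect_def)
  then have "pal_factors (v @ [c]) \<noteq> pal_factors v" by auto
  then obtain s where new: "s \<in> pal_factors (v @ [c]) - pal_factors v"
    using pal_factors_snoc_subset[of v c] by blast
  show ?thesis using that new_pal_factor_snoc[OF new] by blast
qed

definition unioccurrent_pal_suffixes_from :: "(nat \<Rightarrow> 'a) \<Rightarrow> nat \<Rightarrow> bool" where
  "unioccurrent_pal_suffixes_from u N \<longleftrightarrow>
     (\<forall>n>N. \<exists>k\<le>n. palindrome (seg u (n - k) k) \<and> (\<forall>j. j + k < n \<longrightarrow> seg u j k \<noteq> seg u (n - k) k))"

text \<open>The defects of the prefixes form a bounded nondecreasing sequence; once it is constant,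
  every new letter creates a new palindrome.\<close>

lemma finite_defect_unioccurrent_pal_suffixes:
  assumes "finite_defect u"
  obtains N where "unioccurrent_pal_suffixes_from u N"
proof -
  define d where "d n = defect (seg u 0 n)" for n
  have "mono d" unfolding mono_iff_le_Suc by (simp add: d_def seg_Suc defect_snoc)
  obtain B where "\<And>n. d n \<le> B" using assms unfolding finite_defect_def d_def by (metis factor_seg)
  then have "finite (range d)" by (meson finite_atMost finite_subset image_subsetI atMost_iff)
  then have "Max (range d) \<in> range d" by (intro Max_in) auto
  then obtain N where N: "d N = Max (range d)" by (metis imageE)
  have "unioccurrent_pal_suffixes_from u N" unfolding unioccurrent_pal_suffixes_from_def
  proof (intro allI impI)
    fix n assume "N < n"
    then obtain n' where n: "n = Suc n'" and "N \<le> n'" by (cases n) auto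
    have "d n \<le> d N" unfolding N using \<open>finite (range d)\<close> by (intro Max_ge) auto
    moreover have "d N \<le> d n'" "d n' \<le> d n" using monoD[OF \<open>mono d\<close>] \<open>N \<le> n'\<close> n by simp_all
    moreover have prefix_n: "seg u 0 n = seg u 0 n' @ [u n']" by (simp add: n seg_Suc)
    ultimately have "defect (seg u 0 n' @ [u n']) = defect (seg u 0 n')" by (simp add: d_def)
    then obtain s where s: "suffix s (seg u 0 n)" "\<not> sublist s (seg u 0 n')" "palindrome s"
      unfolding prefix_n by (rule defect_snoc_eq)
    define k where "k = length s"
    have "s = seg u (n - k) k" "k \<le> n"
      using suffix_seg_start[OF s(1)] suffix_length_le[OF s(1)] by (simp_all add: k_def)
    moreover have "seg u j k \<noteq> s" if "j + k < n" for j
      using s(2) sublist_seg[of 0 j k n' u] that n by auto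
    ultimately show "\<exists>k\<le>n. palindrome (seg u (n - k) k) \<and> (\<forall>j. j + k < n \<longrightarrow> seg u j k \<noteq> seg u (n - k) k)"
      using s(3) by auto
  qed
  then show ?thesis ..
qed

section \<open>Complete return words to a factor and its reversal are palindromes\<close>

text \<open>\<open>y\<close> is a complete return word to \<open>{x, x\<^sup>~}\<close>, where \<open>x = take l y\<close>.\<close>

definition complete_return :: "'a list \<Rightarrow> nat \<Rightarrow> bool" where
  "complete_return y l \<longleftrightarrow> l < length y \<and>
     drop (length y - l) y \<in> {take l y, rev (take l y)} \<and>
     (\<forall>j. 0 < j \<and> j < length y - l \<longrightarrow> take l (drop j y) \<notin> {take l y, rev (take l y)})"

lemma take_drop_rev:
  assumes "j + l \<le> length y"
  shows "take l (drop j (rev y)) = rev (take l (drop (length y - j - l) y))"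
  using assms by (auto simp: list_eq_iff_nth_eq rev_nth)

lemma complete_return_rev_imp:
  assumes "complete_return y l"
  shows "complete_return (rev y) l"
proof -
  let ?m = "length y" and ?x = "take l y" and ?z = "drop (length y - l) y"
  have l: "l < ?m" and z: "?z \<in> {?x, rev ?x}"
    and inner: "\<And>j. 0 < j \<Longrightarrow> j < ?m - l \<Longrightarrow> take l (drop j y) \<notin> {?x, rev ?x}"
    using assms by (auto simp: complete_return_def)
  have x': "take l (rev y) = rev ?z" and z': "drop (?m - l) (rev y) = rev ?x"
    using l by (simp_all add: rev_drop rev_take)
  have pair: "{rev ?z, rev (rev ?z)} = {?x, rev ?x}" using z by auto
  have "take l (drop j (rev y)) \<notin> {rev ?z, rev (rev ?z)}" if "0 < j" "j < ?m - l" for j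
  proof -
    have "take l (drop j (rev y)) = rev (take l (drop (?m - j - l) y))"
      using that by (intro take_drop_rev) simp
    moreover have "take l (drop (?m - j - l) y) \<notin> {?x, rev ?x}" using that by (intro inner) auto
    ultimately show ?thesis unfolding pair by (auto simp: rev_swap)
  qed
  then show ?thesis using l z' pair by (auto simp: complete_return_def x')
qed

lemma complete_return_rev [simp]: "complete_return (rev y) l \<longleftrightarrow> complete_return y l"
  using complete_return_rev_imp[of y l] complete_return_rev_imp[of "rev y" l] by auto

lemma complete_return_seg_iff:
  "complete_return (seg u i m) l \<longleftrightarrow> l < m \<and>
     seg u (i + m - l) l \<in> {seg u i l, rev (seg u i l)} \<and>
     (\<forall>j. 0 < j \<and> j < m - l \<longrightarrow> seg u (i + j) l \<notin> {seg u i l, rev (seg u i l)})"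
proof -
  have "take l (drop j (seg u i m)) = seg u (i + j) l" if "l < m" "j \<le> m - l" for j
    using that by (intro take_drop_seg) simp
  from this[of 0] this[of "m - l"] this show ?thesis
    unfolding complete_return_def by auto
qed

lemma inner_seg_eq:
  assumes "seg u a n = seg u b n" "t + k \<le> n"
  shows "seg u (a + t) k = seg u (b + t) k"
  using assms take_drop_seg[of t k n u a] take_drop_seg[of t k n u b] by simp

lemma inner_seg_eq_rev:
  assumes "seg u a n = rev (seg u b n)" "t + k \<le> n"
  shows "seg u (a + t) k = rev (seg u (b + (n - t - k)) k)"
  using assms take_drop_seg[of t k n u a] take_drop_seg[of "n - t - k" k n u b]
    take_drop_rev[of t k "seg u b n"] by simp

text \<open>A complete return word occurring at \<open>i\<close> cannot end in a proper palindromic suffix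
  that is unioccurrent in \<open>u\<close>'s prefix of length \<open>i + m\<close>: that suffix would be found
  again earlier, at the beginning or inside.\<close>

lemma complete_return_no_unioccurrent_pal_suffix:
  assumes ret: "complete_return (seg u i m) l"
    and km: "k < m" and pal: "palindrome (seg u (i + m - k) k)"
    and uni: "\<forall>j. j + k < i + m \<longrightarrow> seg u j k \<noteq> seg u (i + m - k) k"
  shows False
proof -
  let ?x = "seg u i l" and ?s = "seg u (i + m - k) k"
  have lm: "l < m" and ends: "seg u (i + m - l) l \<in> {?x, rev ?x}"
    and inner: "\<And>j. 0 < j \<Longrightarrow> j < m - l \<Longrightarrow> seg u (i + j) l \<notin> {?x, rev ?x}"
    using ret by (auto simp: complete_return_seg_iff)
  show False
  proof (cases "k \<le> l")
    case True
    from ends show False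
    proof
      assume same: "seg u (i + m - l) l = ?x"
      have "seg u (i + m - l + (l - k)) k = seg u (i + (l - k)) k"
        using True by (intro inner_seg_eq[OF same]) simp
      moreover have "i + m - l + (l - k) = i + m - k" using True lm by simp
      ultimately show False using uni[rule_format, of "i + (l - k)"] True lm by simp
    next
      assume "seg u (i + m - l) l \<in> {rev ?x}"
      then have "seg u (i + m - l + (l - k)) k = rev (seg u (i + (l - (l - k) - k)) k)"
        using True by (intro inner_seg_eq_rev) simp_all
      moreover have "i + m - l + (l - k) = i + m - k" using True lm by simp
      ultimately have "seg u i k = ?s" using True pal by (simp add: palindrome_def rev_swap)
      then show False using uni[rule_format, of i] km by simp
    qed
  next
    case False
    have "seg u (i + m - k + k - l) l = rev (seg u (i + m - k) l)"
      using pal False by (intro palindrome_seg_ends) simp_all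
    moreover have "i + m - k + k - l = i + m - l" "i + m - k = i + (m - k)" using False km by auto
    ultimately have "seg u (i + (m - k)) l \<in> {?x, rev ?x}" using ends by (auto simp: rev_swap)
    moreover have "0 < m - k" "m - k < m - l" using False km by auto
    ultimately show False using inner by blast
  qed
qed

text \<open>Take the leftmost occurrence of the word or its reversal and the unioccurrent palindromic
  suffix of the prefix ending there; it is shorter than the word, for otherwise the word would be
  a palindrome or its reversal would occur further left.\<close>

lemma non_palindrome_occurrence_with_unioccurrent_pal_suffix:
  assumes rich: "unioccurrent_pal_suffixes_from u N" and "N < m"
    and np: "\<not> palindrome (seg u i m)"
  obtains i' k where "seg u i' m \<in> {seg u i m, rev (seg u i m)}" "k < m"
    "palindrome (seg u (i' + m - k) k)" "\<forall>j. j + k < i' + m \<longrightarrow> seg u j k \<noteq> seg u (i' + m - k) k"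
proof -
  let ?Y = "{seg u i m, rev (seg u i m)}"
  define i0 where "i0 = (LEAST i'. seg u i' m \<in> ?Y)"
  have i0: "seg u i0 m \<in> ?Y" unfolding i0_def by (rule LeastI[of _ i]) simp
  have leftmost: "seg u j m \<notin> ?Y" if "j < i0" for j
    using not_less_Least that unfolding i0_def by blast
  from rich \<open>N < m\<close> obtain k where k: "k \<le> i0 + m" "palindrome (seg u (i0 + m - k) k)"
    "\<forall>j. j + k < i0 + m \<longrightarrow> seg u j k \<noteq> seg u (i0 + m - k) k"
    unfolding unioccurrent_pal_suffixes_from_def by (meson add_strict_increasing2 le0)
  have "k \<noteq> m" using i0 np k(2) by auto
  moreover have "\<not> m < k"
  proof
    assume "m < k"
    have "seg u (i0 + m - k + k - m) m = rev (seg u (i0 + m - k) m)"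
      using k(2) \<open>m < k\<close> by (intro palindrome_seg_ends) simp_all
    then have "seg u (i0 + m - k) m \<in> ?Y" using i0 k(1) \<open>m < k\<close> by (auto simp: rev_swap)
    moreover have "i0 + m - k < i0" using k(1) \<open>m < k\<close> by linarith
    ultimately show False using leftmost by blast
  qed
  ultimately have "k < m" by simp
  then show ?thesis using that i0 k(2,3) by blast
qed

lemma complete_return_palindrome:
  assumes rich: "unioccurrent_pal_suffixes_from u N"
    and "factor y u" "N < length y" "complete_return y l"
  shows "palindrome y"
proof (rule ccontr)
  assume np: "\<not> palindrome y"
  obtain i where y: "seg u i (length y) = y" using \<open>factor y u\<close> by (auto simp: factor_iff_seg)
  obtain i' k where "seg u i' (length y) \<in> {y, rev y}" "k < length y"
    "palindrome (seg u (i' + length y - k) k)"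
    "\<forall>j. j + k < i' + length y \<longrightarrow> seg u j k \<noteq> seg u (i' + length y - k) k"
    using non_palindrome_occurrence_with_unioccurrent_pal_suffix[OF rich \<open>N < length y\<close>, of i] np y
    by metis
  moreover have "complete_return (seg u i' (length y)) l"
    using calculation(1) \<open>complete_return y l\<close> by auto
  ultimately show False using complete_return_no_unioccurrent_pal_suffix by blast
qed

section \<open>Consecutive occurrences of a long factor and its reversal\<close>

lemma palindrome_between_consecutive_occurrences:
  assumes rich: "unioccurrent_pal_suffixes_from u N" and "N < n" "p < p'"
    and "seg u p' n \<in> {seg u p n, rev (seg u p n)}"
    and "\<forall>r. p < r \<and> r < p' \<longrightarrow> seg u r n \<notin> {seg u p n, rev (seg u p n)}"
  shows "palindrome (seg u p (p' - p + n))"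
proof (rule complete_return_palindrome[OF rich factor_seg])
  show "N < length (seg u p (p' - p + n))" using assms by simp
  have "p + (p' - p + n) - n = p'" "\<And>j. j < p' - p + n - n \<Longrightarrow> p + j < p'" using \<open>p < p'\<close> by auto
  then show "complete_return (seg u p (p' - p + n)) n"
    using assms unfolding complete_return_seg_iff by auto
qed

text \<open>Only positions \<open>p > 0\<close> are counted, so that every occurrence has a left neighbour
  \<open>u (p - 1)\<close>.\<close>

definition occs :: "(nat \<Rightarrow> 'a) \<Rightarrow> 'a list \<Rightarrow> nat set" where
  "occs u w = {p. 0 < p \<and> seg u p (length w) \<in> {w, rev w}}"

lemma occs_consecutive:
  assumes rich: "unioccurrent_pal_suffixes_from u N" and "N < length w"
    and "p \<in> occs u w" "p' \<in> occs u w" "p < p'"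
    and between: "\<forall>r. p < r \<and> r < p' \<longrightarrow> r \<notin> occs u w"
  shows "seg u p' (length w) = rev (seg u p (length w))" "u (p + length w) = u (p' - 1)"
proof -
  let ?n = "length w" and ?x = "seg u p (length w)"
  have pair: "{?x, rev ?x} = {w, rev w}" using \<open>p \<in> occs u w\<close> by (auto simp: occs_def)
  have pal: "palindrome (seg u p (p' - p + ?n))"
  proof (rule palindrome_between_consecutive_occurrences[OF rich \<open>N < ?n\<close> \<open>p < p'\<close>])
    show "seg u p' ?n \<in> {?x, rev ?x}" using \<open>p' \<in> occs u w\<close> pair by (simp add: occs_def)
    show "\<forall>r. p < r \<and> r < p' \<longrightarrow> seg u r ?n \<notin> {?x, rev ?x}"
      using between pair by (auto simp: occs_def)
  qed
  have "seg u (p + (p' - p + ?n) - ?n) ?n = rev ?x" using pal by (rule palindrome_seg_ends) simp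
  moreover have "u (p + ?n) = u (p + (p' - p + ?n) - 1 - ?n)"
    using pal \<open>p < p'\<close> by (intro palindrome_seg_nth) simp_all
  moreover have "p + (p' - p + ?n) - ?n = p'" "p + (p' - p + ?n) - 1 - ?n = p' - 1"
    using \<open>p < p'\<close> by auto
  ultimately show "seg u p' ?n = rev ?x" "u (p + ?n) = u (p' - 1)" by simp_all
qed

text \<open>The factor \<open>a x\<close>, \<open>a = u (p - 1)\<close>, returns as its reversal \<open>x\<^sup>~ a\<close> at \<open>p'\<close> with no
  occurrence of either in between, so the segment from \<open>p - 1\<close> to \<open>p' + n\<close> is a palindrome.\<close>

lemma extended_occurrence_return:
  assumes rich: "unioccurrent_pal_suffixes_from u N" and "N < n" "0 < p" "p < p'"
    and rev: "seg u p' n = rev (seg u p n)" and left: "u (p - 1) = u (p' + n)"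
    and no_left: "\<forall>r. p < r \<and> r \<le> p' \<and> seg u r n = seg u p n \<longrightarrow> u (r - 1) \<noteq> u (p - 1)"
    and no_right: "\<forall>r. p \<le> r \<and> r < p' \<and> seg u r n = rev (seg u p n) \<longrightarrow> u (r + n) \<noteq> u (p - 1)"
  shows "u (p + n) = u (p' - 1)"
proof -
  let ?x = "seg u p n" and ?a = "u (p - 1)" and ?m = "p' - (p - 1) + Suc n"
  have start: "seg u (p - 1) (Suc n) = ?a # ?x" using \<open>0 < p\<close> by (simp add: seg_Cons)
  have pal: "palindrome (seg u (p - 1) ?m)"
  proof (rule palindrome_between_consecutive_occurrences[OF rich])
    show "N < Suc n" "p - 1 < p'" using assms by auto
    have "seg u p' (Suc n) = rev ?x @ [u (p' + n)]" using rev by (simp add: seg_Suc)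
    then show "seg u p' (Suc n) \<in> {seg u (p - 1) (Suc n), rev (seg u (p - 1) (Suc n))}"
      using start left by simp
    show "\<forall>r. p - 1 < r \<and> r < p' \<longrightarrow>
        seg u r (Suc n) \<notin> {seg u (p - 1) (Suc n), rev (seg u (p - 1) (Suc n))}"
    proof (intro allI impI)
      fix r assume r: "p - 1 < r \<and> r < p'"
      have "p < Suc r" "Suc r \<le> p'" "p \<le> r" using r by auto
      then have "seg u r (Suc n) \<noteq> ?a # ?x"
        using no_left[rule_format, of "Suc r"] by (auto simp: seg_Cons)
      moreover have "seg u r (Suc n) \<noteq> rev ?x @ [?a]"
        using no_right[rule_format, of r] r \<open>p \<le> r\<close> by (auto simp: seg_Suc)
      ultimately show "seg u r (Suc n) \<notin> {seg u (p - 1) (Suc n), rev (seg u (p - 1) (Suc n))}"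
        using start by simp
    qed
  qed
  then have "u (p - 1 + Suc n) = u (p - 1 + ?m - 1 - Suc n)"
    by (rule palindrome_seg_nth) (use \<open>p < p'\<close> in simp)
  moreover have "p - 1 + Suc n = p + n" "p - 1 + ?m - 1 - Suc n = p' - 1" using assms by auto
  ultimately show ?thesis by simp
qed

section \<open>Trees traced out by an infinite walk\<close>

lemma walk_singleton: "x \<in> V \<Longrightarrow> walk V E [x]"
  by (simp add: walk_def)

lemma walk_snoc:
  assumes "walk V E p" "{last p, y} \<in> E" "y \<in> V"
  shows "walk V E (p @ [y])"
  unfolding walk_def
proof (intro conjI allI impI)
  show "p @ [y] \<noteq> []" "set (p @ [y]) \<subseteq> V" using assms by (auto simp: walk_def)
  fix i assume i: "Suc i < length (p @ [y])"
  show "{(p @ [y]) ! i, (p @ [y]) ! Suc i} \<in> E"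
  proof (cases "Suc i < length p")
    case True
    then show ?thesis using assms(1) by (auto simp: walk_def nth_append)
  next
    case False
    then have "i = length p - 1" "p \<noteq> []" using i assms(1) by (auto simp: walk_def)
    then show ?thesis using assms(2) by (simp add: nth_append last_conv_nth)
  qed
qed

lemma walk_rev:
  assumes "walk V E p"
  shows "walk V E (rev p)"
  unfolding walk_def
proof (intro conjI allI impI)
  show "rev p \<noteq> []" "set (rev p) \<subseteq> V" using assms by (auto simp: walk_def)
  fix i assume i: "Suc i < length (rev p)"
  let ?j = "length p - 2 - i"
  have "{p ! ?j, p ! Suc ?j} \<in> E" using assms i by (simp add: walk_def)
  moreover have "rev p ! i = p ! Suc ?j" "rev p ! Suc i = p ! ?j"
    using i by (simp_all add: rev_nth Suc_diff_Suc numeral_2_eq_2)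
  ultimately show "{rev p ! i, rev p ! Suc i} \<in> E" by (simp add: insert_commute)
qed

lemma has_cycle_two_neighbours:
  assumes "walk V E p" "distinct p" "length p \<ge> 3" "{last p, hd p} \<in> E" "k < length p"
  obtains d1 d2 where "d1 \<in> set p" "d2 \<in> set p" "d1 \<noteq> d2" "{p ! k, d1} \<in> E" "{p ! k, d2} \<in> E"
proof -
  let ?n = "length p"
  have step: "\<And>i. Suc i < ?n \<Longrightarrow> {p ! i, p ! Suc i} \<in> E" using assms(1) by (simp add: walk_def)
  have "p \<noteq> []" using assms(3) by auto
  then have close: "{p ! (?n - 1), p ! 0} \<in> E" using assms(4) by (simp add: hd_conv_nth last_conv_nth)
  have dist: "\<And>i j. i < ?n \<Longrightarrow> j < ?n \<Longrightarrow> i \<noteq> j \<Longrightarrow> p ! i \<noteq> p ! j"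
    using assms(2) by (simp add: nth_eq_iff_index_eq)
  consider "k = 0" | "k = ?n - 1" | "0 < k" "k < ?n - 1" using assms(5) by linarith
  then show ?thesis
  proof cases
    case 1
    then show ?thesis using that[of "p ! 1" "p ! (?n - 1)"] step[of 0] close dist[of 1 "?n - 1"] assms(3)
      by (auto simp: insert_commute)
  next
    case 2
    show ?thesis
    proof (rule that[of "p ! (?n - 2)" "p ! 0"])
      show "p ! (?n - 2) \<in> set p" "p ! 0 \<in> set p" "p ! (?n - 2) \<noteq> p ! 0"
        using assms(3) dist[of "?n - 2" 0] \<open>p \<noteq> []\<close> by simp_all
      show "{p ! k, p ! (?n - 2)} \<in> E"
        using step[of "?n - 2"] 2 assms(3) by (simp add: insert_commute numeral_2_eq_2 Suc_diff_Suc)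
      show "{p ! k, p ! 0} \<in> E" using close 2 by simp
    qed
  next
    case 3
    then show ?thesis using that[of "p ! (k - 1)" "p ! Suc k"] step[of "k - 1"] step[of k] dist[of "k - 1" "Suc k"]
      by (auto simp: insert_commute)
  qed
qed

text \<open>If each edge joins a vertex to its parent or to a vertex of larger rank, there is no cycle:
  the vertex of largest rank on a cycle would have two neighbours on it, both its parent.\<close>

lemma no_cycle_if_edges_to_parent:
  fixes rank :: "'v \<Rightarrow> nat"
  assumes "\<And>c d. {c, d} \<in> E \<Longrightarrow> d = parent c \<or> rank c < rank d"
  shows "\<not> has_cycle V E"
proof
  assume "has_cycle V E"
  then obtain p where p: "walk V E p" "distinct p" "length p \<ge> 3" "{last p, hd p} \<in> E"
    unfolding has_cycle_def by blast
  have "rank ` set p \<noteq> {}" using p(3) by auto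
  then have "Max (rank ` set p) \<in> rank ` set p" by (intro Max_in) auto
  then obtain c where "c \<in> set p" "rank c = Max (rank ` set p)" by auto
  then obtain k where k: "k < length p" "rank (p ! k) = Max (rank ` set p)"
    by (auto simp: in_set_conv_nth)
  obtain d1 d2 where d: "d1 \<in> set p" "d2 \<in> set p" "d1 \<noteq> d2" "{p ! k, d1} \<in> E" "{p ! k, d2} \<in> E"
    using has_cycle_two_neighbours[OF p k(1)] .
  have "rank d1 \<le> rank (p ! k)" "rank d2 \<le> rank (p ! k)" using d(1,2) k(2) by simp_all
  then have "d1 = parent (p ! k)" "d2 = parent (p ! k)" using assms d(4,5) by (meson not_less)+
  with d(3) show False by simp
qed

lemma connected_graph_if_walk_seq:
  fixes V :: "nat \<Rightarrow> 'v"
  assumes "\<And>t. V t \<in> VG" "\<And>x. x \<in> VG \<Longrightarrow> \<exists>t. V t = x"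
    and "\<And>t. V t \<noteq> V (Suc t) \<Longrightarrow> {V t, V (Suc t)} \<in> EG"
  shows "connected_graph VG EG"
proof -
  define joined where "joined x y \<longleftrightarrow> (\<exists>p. walk VG EG p \<and> hd p = x \<and> last p = y)" for x y
  have forward: "joined (V s) (V (s + k))" for s k
  proof (induction k)
    case 0
    show ?case unfolding joined_def using walk_singleton[OF assms(1)] by force
  next
    case (Suc k)
    then obtain p where p: "walk VG EG p" "hd p = V s" "last p = V (s + k)" unfolding joined_def by auto
    show ?case
    proof (cases "V (s + k) = V (Suc (s + k))")
      case False
      then have "walk VG EG (p @ [V (Suc (s + k))])" using walk_snoc[OF p(1)] assms(1,3) p(3) by simp
      moreover have "p \<noteq> []" using p(1) by (simp add: walk_def)
      ultimately show ?thesis unfolding joined_def using p by (intro exI[of _ "p @ [V (Suc (s + k))]"]) auto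
    qed (use Suc in simp)
  qed
  have backward: "joined y x" if "joined x y" for x y
    using that walk_rev unfolding joined_def by (metis hd_rev last_rev)
  show ?thesis unfolding connected_graph_def joined_def[symmetric]
  proof (intro ballI)
    fix x y assume "x \<in> VG" "y \<in> VG"
    then obtain s t where "V s = x" "V t = y" using assms(2) by blast
    then show "joined x y"
      using forward[of s "t - s"] forward[of t "s - t"] backward by (cases "s \<le> t") auto
  qed
qed

definition first_visit :: "(nat \<Rightarrow> 'v) \<Rightarrow> 'v \<Rightarrow> nat" where
  "first_visit V x = (LEAST t. V t = x)"

lemma first_visit_le: "first_visit V (V t) \<le> t"
  unfolding first_visit_def by (rule Least_le) simp

lemma visit_first_visit: "V (first_visit V (V t)) = V t"
  unfolding first_visit_def by (rule LeastI) simp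

text \<open>Every excursion of the walk from a vertex comes back along the edge by which it left.\<close>

definition returns_by_exit_edge :: "(nat \<Rightarrow> 'v) \<Rightarrow> bool" where
  "returns_by_exit_edge V \<longleftrightarrow> (\<forall>s t. s < t \<and> V s = V t \<and> V (Suc s) \<noteq> V s \<and>
     (\<forall>r. s < r \<and> r < t \<longrightarrow> V r \<noteq> V s) \<longrightarrow> V (Suc s) = V (t - 1))"

lemma returns_by_exit_edgeI:
  assumes "\<And>s t. s < t \<Longrightarrow> V s = V t \<Longrightarrow> V (Suc s) \<noteq> V s \<Longrightarrow>
    \<forall>r. s < r \<and> r < t \<longrightarrow> V r \<noteq> V s \<Longrightarrow> V (Suc s) = V (t - 1)"
  shows "returns_by_exit_edge V"
  using assms unfolding returns_by_exit_edge_def by blast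

lemma returns_by_exit_edgeD:
  assumes "returns_by_exit_edge V" "s < t" "V s = V t" "V (Suc s) \<noteq> V s"
    "\<forall>r. s < r \<and> r < t \<longrightarrow> V r \<noteq> V s"
  shows "V (Suc s) = V (t - 1)"
  using assms unfolding returns_by_exit_edge_def by blast

lemma step_to_visited_repeats_step:
  fixes V :: "nat \<Rightarrow> 'v"
  assumes return: "returns_by_exit_edge V"
    and step: "V t \<noteq> V (Suc t)" and visited: "first_visit V (V (Suc t)) \<le> t"
  obtains s where "s < t" "V s \<noteq> V (Suc s)" "{V t, V (Suc t)} = {V s, V (Suc s)}"
proof -
  define s where "s = (GREATEST s. s \<le> t \<and> V s = V (Suc t))"
  have "first_visit V (V (Suc t)) \<le> t \<and> V (first_visit V (V (Suc t))) = V (Suc t)"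
    using visited visit_first_visit by blast
  then have "s \<le> t \<and> V s = V (Suc t)"
    unfolding s_def by (rule GreatestI_nat[where b = t]) simp
  then have s: "s \<le> t" "V s = V (Suc t)" by simp_all
  have last: "r \<le> s" if "r \<le> t" "V r = V (Suc t)" for r
    unfolding s_def using that by (intro Greatest_le_nat[where b = t]) simp_all
  have "s < t" using s step by (metis le_neq_implies_less)
  have leave: "V (Suc s) \<noteq> V s" using last[of "Suc s"] s \<open>s < t\<close> by fastforce
  have "V r \<noteq> V s" if "s < r" "r < Suc t" for r using last[of r] that s by fastforce
  then have "V (Suc s) = V (Suc t - 1)"
    using \<open>s < t\<close> s(2) leave by (intro returns_by_exit_edgeD[OF return]) auto
  then show ?thesis using that \<open>s < t\<close> leave s by (auto simp: insert_commute)
qed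

lemma step_joins_first_visit_parent:
  fixes V :: "nat \<Rightarrow> 'v"
  assumes return: "returns_by_exit_edge V"
    and "V t \<noteq> V (Suc t)"
  shows "\<exists>x. {V t, V (Suc t)} = {x, V (first_visit V x - 1)} \<and>
    first_visit V (V (first_visit V x - 1)) < first_visit V x"
  using assms(2)
proof (induction t rule: less_induct)
  case (less t)
  show ?case
  proof (cases "first_visit V (V (Suc t)) = Suc t")
    case True
    then show ?thesis using first_visit_le[of V t] by (intro exI[of _ "V (Suc t)"]) (auto simp: insert_commute)
  next
    case False
    then have "first_visit V (V (Suc t)) \<le> t" using first_visit_le[of V "Suc t"] by simp
    then obtain s where "s < t" "V s \<noteq> V (Suc s)" "{V t, V (Suc t)} = {V s, V (Suc s)}"
      using step_to_visited_repeats_step[OF return less.prems] by blast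
    then show ?thesis using less.IH by metis
  qed
qed

lemma is_tree_of_walk_seq:
  fixes V :: "nat \<Rightarrow> 'v"
  assumes "finite VG" "VG \<noteq> {}" "EG \<subseteq> {{x, y} | x y. x \<in> VG \<and> y \<in> VG \<and> x \<noteq> y}"
    and vertices: "\<And>t. V t \<in> VG" and cover: "\<And>x. x \<in> VG \<Longrightarrow> \<exists>t. V t = x"
    and steps: "\<And>t. V t \<noteq> V (Suc t) \<Longrightarrow> {V t, V (Suc t)} \<in> EG"
    and edges: "\<And>e. e \<in> EG \<Longrightarrow> \<exists>t. V t \<noteq> V (Suc t) \<and> e = {V t, V (Suc t)}"
    and return: "returns_by_exit_edge V"
  shows "is_tree VG EG"
proof -
  have "d = V (first_visit V c - 1) \<or> first_visit V c < first_visit V d" if cd: "{c, d} \<in> EG" for c d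
  proof -
    obtain t where t: "V t \<noteq> V (Suc t)" "{c, d} = {V t, V (Suc t)}" using edges[OF cd] by blast
    have "\<exists>x. {V t, V (Suc t)} = {x, V (first_visit V x - 1)} \<and>
        first_visit V (V (first_visit V x - 1)) < first_visit V x"
      by (rule step_joins_first_visit_parent[OF return t(1)])
    then obtain x where "{c, d} = {x, V (first_visit V x - 1)}"
        "first_visit V (V (first_visit V x - 1)) < first_visit V x"
      using t(2) by auto
    then show ?thesis by (cases "x = c") (auto simp: doubleton_eq_iff)
  qed
  then have "\<not> has_cycle VG EG" by (rule no_cycle_if_edges_to_parent)
  moreover have "connected_graph VG EG" using vertices cover steps by (rule connected_graph_if_walk_seq)
  ultimately show ?thesis using assms(1-3) by (simp add: is_tree_def)
qed

text \<open>A set \<open>Occ\<close> of positive times, each traversing an edge from \<open>inn p\<close> to \<open>out p\<close>, gives a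
  walk: between occurrences it rests at the exit of the last occurrence.\<close>

definition occ_walk :: "nat set \<Rightarrow> (nat \<Rightarrow> 'v) \<Rightarrow> (nat \<Rightarrow> 'v) \<Rightarrow> nat \<Rightarrow> 'v" where
  "occ_walk Occ inn out t =
     (if \<exists>p\<in>Occ. p \<le> t then out (GREATEST p. p \<in> Occ \<and> p \<le> t) else inn (LEAST p. p \<in> Occ))"

lemma last_occ:
  fixes Occ :: "nat set"
  assumes "p \<in> Occ" "p \<le> t"
  shows "(GREATEST p. p \<in> Occ \<and> p \<le> t) \<in> Occ" "(GREATEST p. p \<in> Occ \<and> p \<le> t) \<le> t"
    "\<And>q. q \<in> Occ \<Longrightarrow> q \<le> t \<Longrightarrow> q \<le> (GREATEST p. p \<in> Occ \<and> p \<le> t)"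
  using GreatestI_nat[of "\<lambda>p. p \<in> Occ \<and> p \<le> t" p t] Greatest_le_nat[of "\<lambda>p. p \<in> Occ \<and> p \<le> t" _ t] assms
  by auto

lemma occ_walk_at_occ:
  assumes "p \<in> Occ"
  shows "occ_walk Occ inn out p = out p"
proof -
  have "(GREATEST q. q \<in> Occ \<and> q \<le> p) = p"
    using last_occ(2)[OF assms le_refl] last_occ(3)[OF assms le_refl assms le_refl] by simp
  then show ?thesis using assms unfolding occ_walk_def by auto
qed

lemma occ_walk_before_occ:
  assumes consecutive: "\<And>p p'. p \<in> Occ \<Longrightarrow> p' \<in> Occ \<Longrightarrow> p < p' \<Longrightarrow>
      (\<forall>r. p < r \<and> r < p' \<longrightarrow> r \<notin> Occ) \<Longrightarrow> out p = inn p'"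
    and "0 \<notin> Occ" "p \<in> Occ"
  shows "occ_walk Occ inn out (p - 1) = inn p"
proof (cases "\<exists>q\<in>Occ. q \<le> p - 1")
  case True
  then obtain q where q: "q \<in> Occ" "q \<le> p - 1" by blast
  let ?g = "GREATEST q. q \<in> Occ \<and> q \<le> p - 1"
  have "0 < p" using assms(2,3) by (cases p) auto
  have "out ?g = inn p"
    using last_occ[OF q] \<open>0 < p\<close> by (intro consecutive[OF _ \<open>p \<in> Occ\<close>]) force+
  then show ?thesis using True unfolding occ_walk_def by simp
next
  case False
  then have "(LEAST q. q \<in> Occ) = p" using \<open>p \<in> Occ\<close> by (intro Least_equality) force+
  then show ?thesis using False unfolding occ_walk_def by simp
qed

lemma occ_walk_moves_at_occ:
  assumes "occ_walk Occ inn out t \<noteq> occ_walk Occ inn out (Suc t)"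
  shows "Suc t \<in> Occ"
proof (rule ccontr)
  assume "Suc t \<notin> Occ"
  then have "(\<lambda>p. p \<in> Occ \<and> p \<le> Suc t) = (\<lambda>p. p \<in> Occ \<and> p \<le> t)" using le_Suc_eq by fastforce
  then have "occ_walk Occ inn out (Suc t) = occ_walk Occ inn out t" unfolding occ_walk_def by metis
  with assms show False by simp
qed

lemma occ_walk_in_occ:
  assumes "Occ \<noteq> {}"
  shows "\<exists>p\<in>Occ. occ_walk Occ inn out t \<in> {inn p, out p}"
proof (cases "\<exists>p\<in>Occ. p \<le> t")
  case True
  then show ?thesis using last_occ(1) unfolding occ_walk_def by auto
next
  case False
  then show ?thesis using LeastI_ex[of "\<lambda>p. p \<in> Occ"] assms unfolding occ_walk_def by auto
qed

lemma occ_walk_returns_by_exit_edge: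
  fixes Occ :: "nat set" and inn out :: "nat \<Rightarrow> 'v"
  assumes consecutive: "\<And>p p'. p \<in> Occ \<Longrightarrow> p' \<in> Occ \<Longrightarrow> p < p' \<Longrightarrow>
      (\<forall>r. p < r \<and> r < p' \<longrightarrow> r \<notin> Occ) \<Longrightarrow> out p = inn p'"
    and return: "\<And>p p'. p \<in> Occ \<Longrightarrow> p' \<in> Occ \<Longrightarrow> p < p' \<Longrightarrow> inn p = out p' \<Longrightarrow>
      (\<forall>r\<in>Occ. p < r \<and> r \<le> p' \<longrightarrow> inn r \<noteq> inn p) \<Longrightarrow>
      (\<forall>r\<in>Occ. p \<le> r \<and> r < p' \<longrightarrow> out r \<noteq> inn p) \<Longrightarrow> out p = inn p'"
    and "0 \<notin> Occ"
  shows "returns_by_exit_edge (occ_walk Occ inn out)"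
proof -
  define V where "V = occ_walk Occ inn out"
  have at: "V p = out p" if "p \<in> Occ" for p
    unfolding V_def by (rule occ_walk_at_occ[OF that])
  have before: "V (p - 1) = inn p" if "p \<in> Occ" for p
    unfolding V_def by (rule occ_walk_before_occ[OF consecutive \<open>0 \<notin> Occ\<close> that])
  have moves: "Suc r \<in> Occ" if "V r \<noteq> V (Suc r)" for r
    using that unfolding V_def by (rule occ_walk_moves_at_occ)
  have "returns_by_exit_edge V"
  proof (rule returns_by_exit_edgeI)
    fix s t assume "s < t" "V s = V t" and leave: "V (Suc s) \<noteq> V s"
      and away: "\<forall>r. s < r \<and> r < t \<longrightarrow> V r \<noteq> V s"
    have s_occ: "Suc s \<in> Occ" using moves leave by metis
    have "Suc s < t" using \<open>s < t\<close> leave \<open>V s = V t\<close> by (metis Suc_lessI)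
    then have "V (t - 1) \<noteq> V t" using away[rule_format, of "t - 1"] \<open>V s = V t\<close> by simp
    then have t_occ: "t \<in> Occ" using moves[of "t - 1"] \<open>s < t\<close> by simp
    have "out (Suc s) = inn t"
    proof (rule return[OF s_occ t_occ \<open>Suc s < t\<close>])
      show "inn (Suc s) = out t" using before[OF s_occ] at[OF t_occ] \<open>V s = V t\<close> by simp
      show "\<forall>r\<in>Occ. Suc s < r \<and> r \<le> t \<longrightarrow> inn r \<noteq> inn (Suc s)"
      proof (intro ballI impI)
        fix r assume "r \<in> Occ" "Suc s < r \<and> r \<le> t"
        moreover have "s < r - 1" "r - 1 < t" using \<open>Suc s < r \<and> r \<le> t\<close> by auto
        ultimately show "inn r \<noteq> inn (Suc s)"
          using before[of r] before[OF s_occ] away by auto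
      qed
      show "\<forall>r\<in>Occ. Suc s \<le> r \<and> r < t \<longrightarrow> out r \<noteq> inn (Suc s)"
      proof (intro ballI impI)
        fix r assume "r \<in> Occ" "Suc s \<le> r \<and> r < t"
        then have "V r \<noteq> V s" using away by simp
        then show "out r \<noteq> inn (Suc s)" using at[OF \<open>r \<in> Occ\<close>] before[OF s_occ] by simp
      qed
    qed
    then show "V (Suc s) = V (t - 1)" using at[OF s_occ] before[OF t_occ] by simp
  qed
  then show ?thesis by (simp only: V_def)
qed

lemma is_tree_of_occurrences:
  fixes Occ :: "nat set" and inn out :: "nat \<Rightarrow> 'v"
  assumes "Occ \<noteq> {}" "0 \<notin> Occ"
    and consecutive: "\<And>p p'. p \<in> Occ \<Longrightarrow> p' \<in> Occ \<Longrightarrow> p < p' \<Longrightarrow>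
      (\<forall>r. p < r \<and> r < p' \<longrightarrow> r \<notin> Occ) \<Longrightarrow> out p = inn p'"
    and return: "\<And>p p'. p \<in> Occ \<Longrightarrow> p' \<in> Occ \<Longrightarrow> p < p' \<Longrightarrow> inn p = out p' \<Longrightarrow>
      (\<forall>r\<in>Occ. p < r \<and> r \<le> p' \<longrightarrow> inn r \<noteq> inn p) \<Longrightarrow>
      (\<forall>r\<in>Occ. p \<le> r \<and> r < p' \<longrightarrow> out r \<noteq> inn p) \<Longrightarrow> out p = inn p'"
    and "finite (inn ` Occ)" and out_inn: "out ` Occ \<subseteq> inn ` Occ"
  shows "is_tree (inn ` Occ) {{inn p, out p} | p. p \<in> Occ \<and> inn p \<noteq> out p}"
proof -
  let ?V = "occ_walk Occ inn out" and ?E = "{{inn p, out p} | p. p \<in> Occ \<and> inn p \<noteq> out p}"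
  have at: "?V p = out p" if "p \<in> Occ" for p
    by (rule occ_walk_at_occ[OF that])
  have before: "?V (p - 1) = inn p" if "p \<in> Occ" for p
    by (rule occ_walk_before_occ[OF consecutive \<open>0 \<notin> Occ\<close> that])
  have pos: "Suc (p - 1) = p" if "p \<in> Occ" for p using that \<open>0 \<notin> Occ\<close> by (cases p) auto
  have "?E \<subseteq> {{x, y} | x y. x \<in> inn ` Occ \<and> y \<in> inn ` Occ \<and> x \<noteq> y}" using out_inn by blast
  moreover have "?V t \<in> inn ` Occ" for t
    using occ_walk_in_occ[OF \<open>Occ \<noteq> {}\<close>, of inn out t] out_inn by fastforce
  moreover have "\<exists>t. ?V t = x" if "x \<in> inn ` Occ" for x using that before by blast
  moreover have "{?V t, ?V (Suc t)} \<in> ?E" if "?V t \<noteq> ?V (Suc t)" for t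
  proof -
    have "Suc t \<in> Occ" by (rule occ_walk_moves_at_occ[OF that])
    then show ?thesis using that at before[of "Suc t"] by auto
  qed
  moreover have "\<exists>t. ?V t \<noteq> ?V (Suc t) \<and> e = {?V t, ?V (Suc t)}" if e: "e \<in> ?E" for e
  proof -
    obtain p where "p \<in> Occ" "inn p \<noteq> out p" "e = {inn p, out p}" using e by blast
    then show ?thesis using at before pos by (intro exI[of _ "p - 1"]) simp
  qed
  moreover have "returns_by_exit_edge ?V"
    using consecutive return \<open>0 \<notin> Occ\<close> by (rule occ_walk_returns_by_exit_edge)
  moreover have "inn ` Occ \<noteq> {}" using \<open>Occ \<noteq> {}\<close> by simp
  ultimately show ?thesis by (intro is_tree_of_walk_seq[OF \<open>finite (inn ` Occ)\<close>])
qed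

section \<open>The extension graphs of long factors\<close>

lemma factor_append_left: "factor (x @ y) u \<Longrightarrow> factor x u"
  and factor_append_right: "factor (x @ y) u \<Longrightarrow> factor y u"
  by (auto simp: factor_iff_seg seg_add)

lemma set_factor:
  assumes "factor w u"
  shows "set w \<subseteq> range u"
proof -
  obtain i where "seg u i (length w) = w" using assms by (auto simp: factor_iff_seg)
  moreover have "set (seg u i (length w)) \<subseteq> range u" by (auto simp: seg_def)
  ultimately show ?thesis by simp
qed

lemma factor_extends_right:
  assumes "factor w u"
  obtains c where "factor (w @ [c]) u"
proof -
  obtain i where "seg u i (length w) = w" using assms by (auto simp: factor_iff_seg)
  then have "seg u i (Suc (length w)) = w @ [u (i + length w)]" by (simp add: seg_Suc)
  then show ?thesis using that factor_seg by metis
qed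

lemma factor_Cons_iff: "factor (c # w) u \<longleftrightarrow> (\<exists>p>0. seg u p (length w) = w \<and> u (p - 1) = c)"
proof
  assume "factor (c # w) u"
  then obtain i where "seg u i (Suc (length w)) = c # w" by (auto simp: factor_iff_seg)
  then have "u i = c" "seg u (Suc i) (length w) = w" by (simp_all add: seg_Cons)
  then show "\<exists>p>0. seg u p (length w) = w \<and> u (p - 1) = c" by (intro exI[of _ "Suc i"]) simp
next
  assume "\<exists>p>0. seg u p (length w) = w \<and> u (p - 1) = c"
  then obtain p where "0 < p" "seg u p (length w) = w" "u (p - 1) = c" by blast
  then have "seg u (p - 1) (Suc (length w)) = c # w" by (simp add: seg_Cons)
  then show "factor (c # w) u" using factor_seg by metis
qed

lemma factor_Cons_snoc_iff:
  "factor (c # w @ [d]) u \<longleftrightarrow>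
     (\<exists>p>0. seg u p (length w) = w \<and> u (p - 1) = c \<and> u (p + length w) = d)"
proof -
  have "factor (c # w @ [d]) u \<longleftrightarrow> (\<exists>p>0. seg u p (Suc (length w)) = w @ [d] \<and> u (p - 1) = c)"
    using factor_Cons_iff[of c "w @ [d]"] by simp
  also have "\<dots> \<longleftrightarrow> (\<exists>p>0. seg u p (length w) = w \<and> u (p - 1) = c \<and> u (p + length w) = d)"
    by (auto simp: seg_Suc)
  finally show ?thesis .
qed

lemma ext_left_subset_range: "ext_left u w \<subseteq> range u"
proof
  fix c assume "c \<in> ext_left u w"
  then have "set (c # w) \<subseteq> range u" by (intro set_factor) (simp add: ext_left_def)
  then show "c \<in> range u" by simp
qed

lemma ext_right_subset_range: "ext_right u w \<subseteq> range u"
proof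
  fix c assume "c \<in> ext_right u w"
  then have "set (w @ [c]) \<subseteq> range u" by (intro set_factor) (simp add: ext_right_def)
  then show "c \<in> range u" by simp
qed

lemma bi_ext_ext_left: "factor (a # w @ [b]) u \<Longrightarrow> a \<in> ext_left u w"
  and bi_ext_ext_right: "factor (a # w @ [b]) u \<Longrightarrow> b \<in> ext_right u w"
  using factor_append_left[of "a # w" "[b]" u] factor_append_right[of "[a]" "w @ [b]" u]
  by (simp_all add: ext_left_def ext_right_def)

lemma factor_around_occurrence:
  "0 < p \<Longrightarrow> seg u p (length w) = w \<Longrightarrow> factor (u (p - 1) # w @ [u (p + length w)]) u"
  unfolding factor_Cons_snoc_iff by blast

lemma factor_rev_iff: "closed_under_reversal u \<Longrightarrow> factor (rev w) u \<longleftrightarrow> factor w u"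
  unfolding closed_under_reversal_def by (metis rev_rev_ident)

lemma factor_snoc_rev_iff: "closed_under_reversal u \<Longrightarrow> factor (w @ [c]) u \<longleftrightarrow> factor (c # rev w) u"
  using factor_rev_iff[of u "c # rev w"] by simp

lemma factor_Cons_snoc_rev_iff:
  "closed_under_reversal u \<Longrightarrow> factor (c # w @ [d]) u \<longleftrightarrow> factor (d # rev w @ [c]) u"
  using factor_rev_iff[of u "d # rev w @ [c]"] by simp

lemma occs_palindrome: "palindrome w \<Longrightarrow> occs u w = {p. 0 < p \<and> seg u p (length w) = w}"
  by (auto simp: occs_def palindrome_def)

lemma Theta_V_eq_occs:
  assumes "closed_under_reversal u" "palindrome w"
  shows "Theta_V u w = (\<lambda>p. u (p - 1)) ` occs u w"
proof -
  have "rev w = w" using assms(2) by (simp add: palindrome_def)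
  then show ?thesis
    unfolding Theta_V_def ext_right_def factor_snoc_rev_iff[OF assms(1)] factor_Cons_iff
      occs_palindrome[OF assms(2)]
    by auto
qed

lemma Theta_E_eq_occs:
  assumes "palindrome w"
  shows "Theta_E u w =
    {{u (p - 1), u (p + length w)} | p. p \<in> occs u w \<and> u (p - 1) \<noteq> u (p + length w)}"
    (is "_ = ?E")
proof (intro equalityI subsetI)
  fix e assume "e \<in> Theta_E u w"
  then obtain a b where e: "e = {a, b}" "a \<noteq> b" "factor (a # w @ [b]) u"
    by (auto simp: Theta_E_def bi_ext_def)
  then obtain p where "0 < p" "seg u p (length w) = w" "u (p - 1) = a" "u (p + length w) = b"
    unfolding factor_Cons_snoc_iff by blast
  then have "p \<in> occs u w" "e = {u (p - 1), u (p + length w)}" "u (p - 1) \<noteq> u (p + length w)"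
    using e occs_palindrome[OF assms] by simp_all
  then show "e \<in> ?E" by blast
next
  fix e assume "e \<in> ?E"
  then obtain p where "e = {u (p - 1), u (p + length w)}" "u (p - 1) \<noteq> u (p + length w)"
    "p \<in> occs u w" by blast
  moreover have "factor (u (p - 1) # w @ [u (p + length w)]) u"
    using \<open>p \<in> occs u w\<close> factor_around_occurrence[of p u w] occs_palindrome[OF assms] by simp
  ultimately show "e \<in> Theta_E u w" unfolding Theta_E_def bi_ext_def by blast
qed

lemma is_tree_Theta:
  assumes rich: "unioccurrent_pal_suffixes_from u N" and closed: "closed_under_reversal u"
    and "finite A" "range u \<subseteq> A"
    and "factor w u" "palindrome w" "N < length w"
  shows "is_tree (Theta_V u w) (Theta_E u w)"
proof -
  let ?n = "length w" and ?inn = "\<lambda>p. u (p - 1)" and ?out = "\<lambda>p. u (p + length w)"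
  have occ: "p \<in> occs u w \<longleftrightarrow> 0 < p \<and> seg u p ?n = w" for p
    using occs_palindrome[OF \<open>palindrome w\<close>] by simp
  note vertices = Theta_V_eq_occs[OF closed \<open>palindrome w\<close>]
  obtain c where "factor (w @ [c]) u" using factor_extends_right[OF \<open>factor w u\<close>] .
  then have nonempty: "occs u w \<noteq> {}" using vertices by (auto simp: Theta_V_def ext_right_def)
  have zero: "0 \<notin> occs u w" by (simp add: occs_def)
  have consecutive: "?out p = ?inn p'" if "p \<in> occs u w" "p' \<in> occs u w" "p < p'"
      "\<forall>r. p < r \<and> r < p' \<longrightarrow> r \<notin> occs u w" for p p'
    by (rule occs_consecutive(2)[OF rich \<open>N < ?n\<close> that])
  have return: "?out p = ?inn p'" if "p \<in> occs u w" "p' \<in> occs u w" "p < p'" "?inn p = ?out p'"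
      "\<forall>r\<in>occs u w. p < r \<and> r \<le> p' \<longrightarrow> ?inn r \<noteq> ?inn p"
      "\<forall>r\<in>occs u w. p \<le> r \<and> r < p' \<longrightarrow> ?out r \<noteq> ?inn p" for p p'
  proof -
    have "0 < p" "seg u p' ?n = rev (seg u p ?n)"
      using that(1,2) \<open>palindrome w\<close> by (simp_all add: occ palindrome_def)
    moreover have "\<forall>r. p < r \<and> r \<le> p' \<and> seg u r ?n = seg u p ?n \<longrightarrow> u (r - 1) \<noteq> u (p - 1)"
      using that(1,5) by (auto simp: occ)
    moreover have "\<forall>r. p \<le> r \<and> r < p' \<and> seg u r ?n = rev (seg u p ?n) \<longrightarrow> u (r + ?n) \<noteq> u (p - 1)"
      using that(1,6) \<open>palindrome w\<close> by (auto simp: occ palindrome_def)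
    ultimately show ?thesis using extended_occurrence_return[OF rich \<open>N < ?n\<close> _ that(3) _ that(4)] by blast
  qed
  have "Theta_V u w \<subseteq> A"
    unfolding Theta_V_def using ext_right_subset_range[of u w] \<open>range u \<subseteq> A\<close> by (rule order_trans)
  then have "finite (Theta_V u w)" using \<open>finite A\<close> by (rule finite_subset)
  then have finite: "finite (?inn ` occs u w)" by (simp only: vertices)
  have "?out p \<in> Theta_V u w" if "p \<in> occs u w" for p
  proof -
    have "factor (?inn p # w @ [?out p]) u" using that factor_around_occurrence[of p u w] by (simp add: occ)
    then show ?thesis unfolding Theta_V_def by (rule bi_ext_ext_right)
  qed
  then have "?out ` occs u w \<subseteq> ?inn ` occs u w" unfolding vertices[symmetric] by blast
  from is_tree_of_occurrences[OF nonempty zero consecutive return finite this]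
  show ?thesis unfolding vertices Theta_E_eq_occs[OF \<open>palindrome w\<close>] .
qed

text \<open>An occurrence of \<open>w\<close> traverses the edge from \<open>Inl\<close> of its left letter to \<open>Inr\<close> of its
  right letter; an occurrence of the reversal traverses such an edge backwards.\<close>

definition Gamma_in :: "(nat \<Rightarrow> 'a) \<Rightarrow> 'a list \<Rightarrow> nat \<Rightarrow> 'a + 'a" where
  "Gamma_in u w p = (if seg u p (length w) = w then Inl else Inr) (u (p - 1))"

definition Gamma_out :: "(nat \<Rightarrow> 'a) \<Rightarrow> 'a list \<Rightarrow> nat \<Rightarrow> 'a + 'a" where
  "Gamma_out u w p = (if seg u p (length w) = w then Inr else Inl) (u (p + length w))"

lemma Gamma_V_eq_occs:
  assumes "closed_under_reversal u" "\<not> palindrome w"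
  shows "Gamma_V u w = Gamma_in u w ` occs u w"
proof -
  let ?n = "length w" and ?inn = "Gamma_in u w"
  let ?occ_w = "{p. 0 < p \<and> seg u p ?n = w}" and ?occ_rev = "{p. 0 < p \<and> seg u p ?n = rev w}"
  have "rev w \<noteq> w" using assms(2) by (simp add: palindrome_def)
  have "ext_left u w = (\<lambda>p. u (p - 1)) ` ?occ_w"
    by (auto simp: ext_left_def factor_Cons_iff)
  moreover have "ext_right u w = (\<lambda>p. u (p - 1)) ` ?occ_rev"
    by (auto simp: ext_right_def factor_snoc_rev_iff[OF assms(1)] factor_Cons_iff)
  moreover have "?inn ` ?occ_w = Inl ` (\<lambda>p. u (p - 1)) ` ?occ_w"
    unfolding image_image by (rule image_cong) (auto simp: Gamma_in_def)
  moreover have "?inn ` ?occ_rev = Inr ` (\<lambda>p. u (p - 1)) ` ?occ_rev"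
    unfolding image_image by (rule image_cong) (use \<open>rev w \<noteq> w\<close> in \<open>auto simp: Gamma_in_def\<close>)
  moreover have "occs u w = ?occ_w \<union> ?occ_rev" by (auto simp: occs_def)
  ultimately show ?thesis by (simp add: Gamma_V_def image_Un)
qed

lemma occs_Gamma_edge:
  assumes "closed_under_reversal u" "p \<in> occs u w"
  obtains a b where "{Gamma_in u w p, Gamma_out u w p} = {Inl a, Inr b}" "factor (a # w @ [b]) u"
proof (cases "seg u p (length w) = w")
  case True
  moreover have "0 < p" using assms(2) by (simp add: occs_def)
  ultimately show ?thesis using that factor_around_occurrence[of p u w]
    by (simp add: Gamma_in_def Gamma_out_def)
next
  case False
  then have "seg u p (length (rev w)) = rev w" "0 < p" using assms(2) by (auto simp: occs_def)
  then have "factor (u (p - 1) # rev w @ [u (p + length w)]) u"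
    using factor_around_occurrence[of p u "rev w"] by simp
  then have "factor (u (p + length w) # w @ [u (p - 1)]) u"
    using factor_Cons_snoc_rev_iff[OF assms(1), of "u (p - 1)" "rev w" "u (p + length w)"] by simp
  then show ?thesis using that False by (simp add: Gamma_in_def Gamma_out_def insert_commute)
qed

lemma Gamma_E_eq_occs:
  assumes "closed_under_reversal u"
  shows "Gamma_E u w = {{Gamma_in u w p, Gamma_out u w p} | p.
    p \<in> occs u w \<and> Gamma_in u w p \<noteq> Gamma_out u w p}" (is "_ = ?E")
proof (intro equalityI subsetI)
  fix e assume "e \<in> Gamma_E u w"
  then obtain a b where e: "e = {Inl a, Inr b}" "factor (a # w @ [b]) u"
    by (auto simp: Gamma_E_def bi_ext_def)
  then obtain p where p: "0 < p" "seg u p (length w) = w" "u (p - 1) = a" "u (p + length w) = b"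
    unfolding factor_Cons_snoc_iff by blast
  then have "p \<in> occs u w" by (simp add: occs_def)
  moreover have "Gamma_in u w p = Inl a" "Gamma_out u w p = Inr b"
    using p by (simp_all add: Gamma_in_def Gamma_out_def)
  ultimately show "e \<in> ?E" using e by (intro CollectI exI[of _ p]) simp
next
  fix e assume "e \<in> ?E"
  then obtain p where e: "e = {Gamma_in u w p, Gamma_out u w p}" and p: "p \<in> occs u w" by blast
  obtain a b where "{Gamma_in u w p, Gamma_out u w p} = {Inl a, Inr b}" "factor (a # w @ [b]) u"
    using occs_Gamma_edge[OF assms p] by blast
  then show "e \<in> Gamma_E u w" unfolding e Gamma_E_def bi_ext_def by blast
qed

lemma Gamma_occs_consecutive:
  assumes rich: "unioccurrent_pal_suffixes_from u N" and "\<not> palindrome w" "N < length w"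
    and "p \<in> occs u w" "p' \<in> occs u w" "p < p'" "\<forall>r. p < r \<and> r < p' \<longrightarrow> r \<notin> occs u w"
  shows "Gamma_out u w p = Gamma_in u w p'"
  using occs_consecutive[OF rich assms(3-)] assms(2,4)
  by (auto simp: occs_def palindrome_def Gamma_in_def Gamma_out_def)

lemma Gamma_occs_return:
  assumes rich: "unioccurrent_pal_suffixes_from u N" and "\<not> palindrome w" "N < length w"
    and "p \<in> occs u w" "p' \<in> occs u w" "p < p'" "Gamma_in u w p = Gamma_out u w p'"
    and no_in: "\<forall>r\<in>occs u w. p < r \<and> r \<le> p' \<longrightarrow> Gamma_in u w r \<noteq> Gamma_in u w p"
    and no_out: "\<forall>r\<in>occs u w. p \<le> r \<and> r < p' \<longrightarrow> Gamma_out u w r \<noteq> Gamma_in u w p"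
  shows "Gamma_out u w p = Gamma_in u w p'"
proof -
  let ?n = "length w"
  have rev_w: "rev w \<noteq> w" using assms(2) by (simp add: palindrome_def)
  have occ: "r \<in> occs u w \<longleftrightarrow> 0 < r \<and> (seg u r ?n = w \<or> seg u r ?n = rev w)" for r
    by (auto simp: occs_def)
  have reversed: "seg u p' ?n = rev (seg u p ?n)" and turn: "u (p - 1) = u (p' + ?n)"
    using assms(4,5,7) rev_w by (auto simp: occ Gamma_in_def Gamma_out_def split: if_splits)
  have "u (p + ?n) = u (p' - 1)"
  proof (rule extended_occurrence_return[OF rich \<open>N < ?n\<close> _ \<open>p < p'\<close> reversed turn])
    show "0 < p" using assms(4) by (simp add: occ)
    show "\<forall>r. p < r \<and> r \<le> p' \<and> seg u r ?n = seg u p ?n \<longrightarrow> u (r - 1) \<noteq> u (p - 1)"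
      using assms(4) no_in by (auto simp: occ Gamma_in_def)
    show "\<forall>r. p \<le> r \<and> r < p' \<and> seg u r ?n = rev (seg u p ?n) \<longrightarrow> u (r + ?n) \<noteq> u (p - 1)"
      using assms(4) no_out rev_w by (auto simp: occ Gamma_in_def Gamma_out_def)
  qed
  then show ?thesis using assms(4) reversed rev_w by (auto simp: occ Gamma_in_def Gamma_out_def)
qed

lemma is_tree_Gamma:
  assumes rich: "unioccurrent_pal_suffixes_from u N" and closed: "closed_under_reversal u"
    and "finite A" "range u \<subseteq> A"
    and "factor w u" "\<not> palindrome w" "N < length w"
  shows "is_tree (Gamma_V u w) (Gamma_E u w)"
proof -
  note vertices = Gamma_V_eq_occs[OF closed \<open>\<not> palindrome w\<close>]
  obtain c where "factor (w @ [c]) u" using factor_extends_right[OF \<open>factor w u\<close>] .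
  then have nonempty: "occs u w \<noteq> {}" using vertices by (auto simp: Gamma_V_def ext_right_def)
  have zero: "0 \<notin> occs u w" by (simp add: occs_def)
  have "ext_left u w \<subseteq> A" using ext_left_subset_range[of u w] \<open>range u \<subseteq> A\<close> by (rule order_trans)
  moreover have "ext_right u w \<subseteq> A" using ext_right_subset_range[of u w] \<open>range u \<subseteq> A\<close> by (rule order_trans)
  ultimately have "Gamma_V u w \<subseteq> Inl ` A \<union> Inr ` A" unfolding Gamma_V_def by blast
  moreover have "finite (Inl ` A \<union> Inr ` A)" using \<open>finite A\<close> by simp
  ultimately have "finite (Gamma_V u w)" by (rule finite_subset)
  then have finite: "finite (Gamma_in u w ` occs u w)" by (simp only: vertices)
  have "Gamma_out u w p \<in> Gamma_V u w" if p: "p \<in> occs u w" for p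
  proof -
    obtain a b where edge: "{Gamma_in u w p, Gamma_out u w p} = {Inl a, Inr b}"
      and ab: "factor (a # w @ [b]) u"
      using occs_Gamma_edge[OF closed p] by blast
    have "Gamma_out u w p \<in> {Inl a, Inr b}" unfolding edge[symmetric] by simp
    moreover have "Inl a \<in> Gamma_V u w" "Inr b \<in> Gamma_V u w"
      using bi_ext_ext_left[OF ab] bi_ext_ext_right[OF ab] by (simp_all add: Gamma_V_def)
    ultimately show ?thesis by auto
  qed
  then have "Gamma_out u w ` occs u w \<subseteq> Gamma_in u w ` occs u w" unfolding vertices[symmetric] by blast
  from is_tree_of_occurrences[OF nonempty zero
      Gamma_occs_consecutive[OF rich \<open>\<not> palindrome w\<close> \<open>N < length w\<close>]
      Gamma_occs_return[OF rich \<open>\<not> palindrome w\<close> \<open>N < length w\<close>] finite this]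
  show ?thesis unfolding vertices Gamma_E_eq_occs[OF closed] .
qed

theorem corollary22:
  fixes u :: "nat \<Rightarrow> 'a" and A :: "'a set"
  assumes "finite A" and "range u \<subseteq> A"
    and "closed_under_reversal u"
    and "finite_defect u"
  shows "\<exists>K::nat. K > 0 \<and>
     (\<forall>w. factor w u \<and> length w \<ge> K \<longrightarrow>
        (\<not> palindrome w \<longrightarrow> is_tree (Gamma_V u w) (Gamma_E u w)) \<and>
        (palindrome w \<longrightarrow> is_tree (Theta_V u w) (Theta_E u w)))"
proof -
  obtain N where rich: "unioccurrent_pal_suffixes_from u N"
    using finite_defect_unioccurrent_pal_suffixes[OF \<open>finite_defect u\<close>] .
  have "(\<not> palindrome w \<longrightarrow> is_tree (Gamma_V u w) (Gamma_E u w)) \<and>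
      (palindrome w \<longrightarrow> is_tree (Theta_V u w) (Theta_E u w))"
    if "factor w u" "length w \<ge> Suc N" for w
    using is_tree_Gamma[OF rich assms(3,1,2) \<open>factor w u\<close>] is_tree_Theta[OF rich assms(3,1,2) \<open>factor w u\<close>]
      that(2) by simp
  then show ?thesis by (intro exI[of _ "Suc N"]) auto
qed

end
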